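(* Let $(X,d)$ be a $\delta$-hyperbolic space and $\gamma$ a hyperbolic isometry of $X$ with $\ell(\gamma)>3\delta$. Then (i) every point $x\in M_{\min}(\gamma)$ satisfies $d(x,M(\gamma))\le\frac72\delta$; (ii) every point $x\in M(\gamma)$ satisfies $d(x,M_{\min}(\gamma))\le\frac{15}{2}\delta$.
   Context: A metric space is $\delta$-hyperbolic if it is proper, geodesic, and every geodesic triangle is $\delta$-thin (any two points of the triangle identified by the canonical tripod approximation of the triangle, which is isometric on each side, are at distance $\le\delta$). An isometry $\gamma$ is hyperbolic if $k\mapsto\gamma^kx$ is a quasi-isometric embedding $\mathbf Z\to X$; its extension to the ideal (Gromov) boundary $\partial X$ then has exactly two fixed points $\gamma^+=\lim_{p\to+\infty}\gamma^px$ and $\gamma^-=\lim_{p\to+\infty}\gamma^{-p}x$. $\ell(\gamma)=\lim_{k\to\infty}\frac1kd(x,\gamma^kx)$ is the asymptotic displacement and $s(\gamma)=\inf_{x\in X}d(x,\gamma x)$ the minimal displacement. $M(\gamma)$ is the union of all geodesic lines $c$ with $c(-\infty)=\gamma^-$ and $c(+\infty)=\gamma^+$, and $M_{\min}(\gamma)$ is the (nonempty, closed) set of points $x$ where $x\mapsto d(x,\gamma x)$ attains its infimum $s(\gamma)$. *)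

theory Defs
  imports "HOL-Analysis.Analysis"
begin

definition gprod :: "'a::metric_space \<Rightarrow> 'a \<Rightarrow> 'a \<Rightarrow> real" where
  "gprod w y z = (dist w y + dist w z - dist y z) / 2"

definition geod_seg :: "(real \<Rightarrow> 'a::metric_space) \<Rightarrow> 'a \<Rightarrow> 'a \<Rightarrow> bool" where
  "geod_seg c x y \<longleftrightarrow> c 0 = x \<and> c (dist x y) = y \<and>
     (\<forall>s\<in>{0..dist x y}. \<forall>t\<in>{0..dist x y}. dist (c s) (c t) = \<bar>s - t\<bar>)"

definition geod_line :: "(real \<Rightarrow> 'a::metric_space) \<Rightarrow> bool" where
  "geod_line c \<longleftrightarrow> (\<forall>s t. dist (c s) (c t) = \<bar>s - t\<bar>)"

definition proper_space :: "'a::metric_space itself \<Rightarrow> bool" where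
  "proper_space _ \<longleftrightarrow> (\<forall>(x::'a) r. compact (cball x r))"

definition geodesic_space :: "'a::metric_space itself \<Rightarrow> bool" where
  "geodesic_space _ \<longleftrightarrow> (\<forall>x y::'a. \<exists>c. geod_seg c x y)"

text \<open>Every geodesic triangle is delta-thin: in the tripod approximation of a triangle
  with vertices x, y, z, the point at distance t from x on the side [x,y] is identified
  with the point at distance t from x on the side [x,z], for 0 <= t <= (y|z)_x.
  Quantifying over all vertices x and all pairs of sides issuing from x (sides from the
  other vertices are obtained by reversing parametrizations) gives exactly the tripod
  condition for all triangles.\<close>
definition thin_triangles :: "'a::metric_space itself \<Rightarrow> real \<Rightarrow> bool" where
  "thin_triangles _ \<delta> \<longleftrightarrow> (\<forall>(x::'a) y z p q. geod_seg p x y \<longrightarrow> geod_seg q x z \<longrightarrow>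
      (\<forall>t. 0 \<le> t \<and> t \<le> gprod x y z \<longrightarrow> dist (p t) (q t) \<le> \<delta>))"

definition delta_hyperbolic :: "'a::metric_space itself \<Rightarrow> real \<Rightarrow> bool" where
  "delta_hyperbolic T \<delta> \<longleftrightarrow> proper_space T \<and> geodesic_space T \<and> thin_triangles T \<delta>"

definition isometry :: "('a::metric_space \<Rightarrow> 'a) \<Rightarrow> bool" where
  "isometry g \<longleftrightarrow> bij g \<and> (\<forall>x y. dist (g x) (g y) = dist x y)"

definition ipow :: "('a \<Rightarrow> 'a) \<Rightarrow> int \<Rightarrow> 'a \<Rightarrow> 'a" where
  "ipow g k = (if 0 \<le> k then g ^^ nat k else inv g ^^ nat (- k))"

definition hyperbolic_isometry :: "('a::metric_space \<Rightarrow> 'a) \<Rightarrow> bool" where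
  "hyperbolic_isometry g \<longleftrightarrow> isometry g \<and>
     (\<exists>x lam C. lam \<ge> 1 \<and> C \<ge> 0 \<and> (\<forall>m n::int.
        \<bar>real_of_int (m - n)\<bar> / lam - C \<le> dist (ipow g m x) (ipow g n x) \<and>
        dist (ipow g m x) (ipow g n x) \<le> lam * \<bar>real_of_int (m - n)\<bar> + C))"

text \<open>Two families f (along filter F) and h (along filter G) converge to the same point
  of the Gromov (sequential) boundary: their mutual Gromov products tend to infinity.\<close>
definition same_ideal_limit ::
  "('b \<Rightarrow> 'a::metric_space) \<Rightarrow> 'b filter \<Rightarrow> ('c \<Rightarrow> 'a) \<Rightarrow> 'c filter \<Rightarrow> bool" where
  "same_ideal_limit f F h G \<longleftrightarrow>
     (\<forall>w R. eventually (\<lambda>(s, t). R \<le> gprod w (f s) (h t)) (F \<times>\<^sub>F G))"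

definition asymp_disp :: "('a::metric_space \<Rightarrow> 'a) \<Rightarrow> real" where
  "asymp_disp g = (THE L. \<forall>x. (\<lambda>k. dist x ((g ^^ k) x) / real k) \<longlonglongrightarrow> L)"

definition min_disp :: "('a::metric_space \<Rightarrow> 'a) \<Rightarrow> real" where
  "min_disp g = (INF x. dist x (g x))"

definition Mmin :: "('a::metric_space \<Rightarrow> 'a) \<Rightarrow> 'a set" where
  "Mmin g = {x. dist x (g x) = min_disp g}"

text \<open>M(g): union of all geodesic lines c with c(-\<infinity>) = g^- and c(+\<infinity>) = g^+,
  where g^+ = lim_{p\<rightarrow>\<infinity>} g^p x and g^- = lim_{p\<rightarrow>\<infinity>} g^{-p} x.\<close>
definition Mset :: "('a::metric_space \<Rightarrow> 'a) \<Rightarrow> 'a set" where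
  "Mset g = \<Union> {range c | c. geod_line c \<and>
      (\<forall>x. same_ideal_limit c at_top (\<lambda>p. ipow g (int p) x) sequentially) \<and>
      (\<forall>x. same_ideal_limit c at_bot (\<lambda>p. ipow g (- int p) x) sequentially)}"

end

(*
  Fix x with d(x, \<gamma> x) = s(\<gamma>) > 3\<delta>. Since d(m, \<gamma>\<^sup>-\<^sup>1 m) \<ge> s(\<gamma>) for a midpoint m of [x, \<gamma> x],
  an induction shows (\<gamma>\<^sup>i x | \<gamma>\<^sup>k x)_{\<gamma>\<^sup>j x} \<le> 3\<delta>/2 for all i \<le> j \<le> k:
  the orbit is a quasi-geodesic growing linearly at rate s(\<gamma>) - 3\<delta> \<ge> \<ell>(\<gamma>) - 3\<delta> > 0.
  Hence the geodesics [\<gamma>\<^sup>-\<^sup>n x, \<gamma>\<^sup>n x] pass within 5\<delta>/2 of x, and by properness a subsequence converges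
  to a line from \<gamma>\<^sup>- to \<gamma>\<^sup>+ through the 5\<delta>/2-ball about x; this gives (i).
  Conversely thinness puts every point of M_min within 9\<delta>/2 of every such line c. Given c(t), the
  difference of the distances to the two halves of c changes sign along the orbit of a point of M_min,
  and M_min contains geodesics joining consecutive orbit points, so some point of M_min is within 9\<delta>/2
  of both halves; a thin triangle then puts c(t) within 11\<delta>/2 of it, which gives (ii).
*)
theory Submission
  imports Defs "HOL-Library.Diagonal_Subsequence"
begin

section \<open>Gromov products and geodesics\<close>

lemma gprod_commute: "gprod w y z = gprod w z y"
  by (simp add: gprod_def dist_commute add.commute)

lemma gprod_nonneg: "0 \<le> gprod w y z"
  using dist_triangle[of y z w] by (simp add: gprod_def dist_commute)

lemma gprod_le_dist_left: "gprod w y z \<le> dist w y"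
  using dist_triangle[of w z y] by (simp add: gprod_def dist_commute)

lemma gprod_le_dist_right: "gprod w y z \<le> dist w z"
  using dist_triangle[of w y z] by (simp add: gprod_def dist_commute)

lemma gprod_add_gprod_swap: "gprod w y z + gprod y w z = dist w y"
  by (simp add: gprod_def dist_commute field_simps)

lemma gprod_base_le: "gprod w y z \<le> gprod w' y z + dist w w'"
  using dist_triangle[of w y w'] dist_triangle[of w z w'] unfolding gprod_def by (simp add: field_simps)

lemma gprod_right_le: "gprod w y z \<le> gprod w y z' + dist z z'"
  using dist_triangle[of w z z'] dist_triangle[of y z' z] by (simp add: gprod_def dist_commute field_simps)

lemma tendsto_gprod:
  assumes "(f \<longlongrightarrow> a) F"
  shows "((\<lambda>n. gprod w (f n) z) \<longlongrightarrow> gprod w a z) F"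
  unfolding gprod_def by (intro tendsto_intros assms) simp

lemma gprod_isometric_image:
  assumes "\<And>a b. dist (g a) (g b) = dist a b"
  shows "gprod (g w) (g y) (g z) = gprod w y z"
  by (simp add: gprod_def assms)

lemma gprod_le_infdist:
  assumes "A \<noteq> {}" and "\<And>a. a \<in> A \<Longrightarrow> gprod w y a = 0"
  shows "gprod w y z \<le> infdist z A"
  unfolding infdist_notempty[OF assms(1)]
proof (rule cINF_greatest[OF assms(1)])
  fix a assume "a \<in> A"
  then show "gprod w y z \<le> dist z a"
    using gprod_right_le[of w y z a] assms(2) by simp
qed

lemma infdist_lessE:
  assumes "infdist x A < e" "A \<noteq> {}"
  obtains a where "a \<in> A" "dist x a < e"
  using assms by (auto simp: infdist_notempty cINF_less_iff)

lemma geod_seg_dist: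
  assumes "geod_seg c x y" "0 \<le> s" "s \<le> dist x y" "0 \<le> t" "t \<le> dist x y"
  shows "dist (c s) (c t) = \<bar>s - t\<bar>"
  using assms unfolding geod_seg_def by auto

lemma geod_seg_dist_start:
  assumes "geod_seg c x y" "0 \<le> t" "t \<le> dist x y"
  shows "dist x (c t) = t"
  using geod_seg_dist[OF assms(1), of 0 t] assms by (simp add: geod_seg_def)

lemma geod_seg_dist_end:
  assumes "geod_seg c x y" "0 \<le> t" "t \<le> dist x y"
  shows "dist (c t) y = dist x y - t"
  using geod_seg_dist[OF assms(1), of t "dist x y"] assms by (simp add: geod_seg_def)

lemma geod_seg_reverse:
  assumes "geod_seg c x y"
  shows "geod_seg (\<lambda>v. c (dist x y - v)) y x"
  using assms unfolding geod_seg_def by (auto simp: dist_commute)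

lemma geod_seg_isometric_image:
  assumes "geod_seg c x y" "\<And>a b. dist (g a) (g b) = dist a b"
  shows "geod_seg (g \<circ> c) (g x) (g y)"
  using assms unfolding geod_seg_def by auto

lemma geod_seg_continuous_on:
  assumes "geod_seg c x y"
  shows "continuous_on {0..dist x y} c"
  unfolding continuous_on_iff
proof (intro ballI allI impI)
  fix u e :: real assume "u \<in> {0..dist x y}" "0 < e"
  then show "\<exists>d>0. \<forall>v\<in>{0..dist x y}. dist v u < d \<longrightarrow> dist (c v) (c u) < e"
    using geod_seg_dist[OF assms] by (intro exI[of _ e]) (auto simp: dist_real_def)
qed

lemma geod_line_segment:
  assumes "geod_line c" "a \<le> b"
  shows "geod_seg (\<lambda>v. c (a + v)) (c a) (c b)"
  using assms unfolding geod_seg_def geod_line_def by auto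

lemma geod_line_gprod_eq_0:
  assumes "geod_line c" "\<tau> \<le> t \<and> t \<le> s \<or> s \<le> t \<and> t \<le> \<tau>"
  shows "gprod (c t) (c s) (c \<tau>) = 0"
  using assms unfolding geod_line_def gprod_def by auto

lemma gprod_geod_seg_ge:
  assumes c: "geod_seg c a b" and uv: "0 \<le> u" "u \<le> v" "v \<le> dist a b"
    and near: "dist x (c u) \<le> r"
  shows "v - u - r \<le> gprod x (c v) b"
proof -
  have "dist (c u) (c v) = v - u" and "dist (c u) b = dist a b - u" and "dist (c v) b = dist a b - v"
    using geod_seg_dist[OF c, of u v] geod_seg_dist_end[OF c] uv by auto
  moreover have "dist (c u) (c v) \<le> dist x (c u) + dist x (c v)"
    and "dist (c u) b \<le> dist x (c u) + dist x b"
    by (metis dist_commute dist_triangle)+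
  ultimately show ?thesis
    using near unfolding gprod_def by (simp add: field_simps)
qed

section \<open>Points of the Gromov boundary\<close>

lemma same_ideal_limitD:
  "same_ideal_limit f F h G \<Longrightarrow> eventually (\<lambda>(s, t). R \<le> gprod w (f s) (h t)) (F \<times>\<^sub>F G)"
  unfolding same_ideal_limit_def by blast

lemma same_ideal_limitI:
  assumes "\<And>R. eventually (\<lambda>(s, t). R \<le> gprod x (f s) (h t)) (F \<times>\<^sub>F G)"
  shows "same_ideal_limit f F h G"
  unfolding same_ideal_limit_def
proof (intro allI)
  fix w R
  show "eventually (\<lambda>(s, t). R \<le> gprod w (f s) (h t)) (F \<times>\<^sub>F G)"
    using assms[of "R + dist x w"]
  proof eventually_elim
    case (elim st)
    then show ?case
      using gprod_base_le[of x "f (fst st)" "h (snd st)" w] by (auto simp: dist_commute)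
  qed
qed

lemma same_ideal_limit_min:
  assumes "filterlim a at_top F" "filterlim b at_top G"
    and "eventually (\<lambda>(s, t). min (a s) (b t) \<le> gprod x (f s) (h t)) (F \<times>\<^sub>F G)"
  shows "same_ideal_limit f F h G"
proof (rule same_ideal_limitI)
  fix R
  have "eventually (\<lambda>(s, t). R \<le> a s \<and> R \<le> b t) (F \<times>\<^sub>F G)"
    using eventually_prodI[OF filterlim_at_top[THEN iffD1, rule_format, OF assms(1), of R]
        filterlim_at_top[THEN iffD1, rule_format, OF assms(2), of R]]
    by (simp add: case_prod_unfold)
  with assms(3) show "eventually (\<lambda>(s, t). R \<le> gprod x (f s) (h t)) (F \<times>\<^sub>F G)"
    by eventually_elim auto
qed

lemma same_ideal_limit_bounded_perturb:
  assumes "same_ideal_limit f F h G" and "\<And>t. dist (h t) (h' t) \<le> C"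
  shows "same_ideal_limit f F h' G"
  unfolding same_ideal_limit_def
proof (intro allI)
  fix w R
  show "eventually (\<lambda>(s, t). R \<le> gprod w (f s) (h' t)) (F \<times>\<^sub>F G)"
    using same_ideal_limitD[OF assms(1), where w=w and R="R + C"]
  proof eventually_elim
    case (elim st)
    then show ?case
      using gprod_right_le[of w "f (fst st)" "h (snd st)" "h' (snd st)"] assms(2)[of "snd st"]
      by (auto simp: case_prod_beta)
  qed
qed

lemma same_ideal_limit_obtain:
  assumes "same_ideal_limit f F h G" "F \<noteq> bot" "G \<noteq> bot" "eventually P F"
  obtains s t where "P s" "R \<le> gprod w (f s) (h t)"
proof -
  have "eventually (\<lambda>(s, t). P s \<and> R \<le> gprod w (f s) (h t)) (F \<times>\<^sub>F G)"
    using same_ideal_limitD[OF assms(1), where w=w and R=R]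
      eventually_prodI[OF assms(4) eventually_True[of G]]
    by eventually_elim auto
  moreover have "F \<times>\<^sub>F G \<noteq> bot"
    using assms(2,3) by (simp add: prod_filter_eq_bot)
  ultimately show ?thesis
    using that eventually_happens' by fastforce
qed

lemma same_ideal_limit_escapes:
  assumes "same_ideal_limit f F h G" "F \<noteq> bot" "G \<noteq> bot" "A \<noteq> {}"
    and "eventually (\<lambda>s. \<forall>a\<in>A. gprod w (f s) a = 0) F"
  shows "\<exists>t. D < infdist (h t) A"
proof -
  obtain s t where "\<forall>a\<in>A. gprod w (f s) a = 0" "D + 1 \<le> gprod w (f s) (h t)"
    using same_ideal_limit_obtain[OF assms(1-3,5)] .
  then show ?thesis
    using gprod_le_infdist[OF assms(4), of w "f s" "h t"] by (intro exI[of _ t]) auto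
qed

definition axis :: "('a::metric_space \<Rightarrow> 'a) \<Rightarrow> (real \<Rightarrow> 'a) \<Rightarrow> bool" where
  "axis g c \<longleftrightarrow> geod_line c \<and>
      (\<forall>x. same_ideal_limit c at_top (\<lambda>p. ipow g (int p) x) sequentially) \<and>
      (\<forall>x. same_ideal_limit c at_bot (\<lambda>p. ipow g (- int p) x) sequentially)"

lemma mem_Mset_iff: "y \<in> Mset g \<longleftrightarrow> (\<exists>c t. axis g c \<and> y = c t)"
  unfolding Mset_def axis_def by blast

section \<open>Thin triangles\<close>

context
  fixes \<delta> :: real
  assumes hyp: "delta_hyperbolic TYPE('a::metric_space) \<delta>"
begin

lemma thin:
  fixes x y z :: 'a
  assumes "geod_seg p x y" "geod_seg q x z" "0 \<le> t" "t \<le> gprod x y z"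
  shows "dist (p t) (q t) \<le> \<delta>"
  using hyp assms unfolding delta_hyperbolic_def thin_triangles_def by blast

lemma geod_seg_exists: "\<exists>c. geod_seg c (x::'a) y"
  using hyp unfolding delta_hyperbolic_def geodesic_space_def by blast

lemma proper_compact_cball: "compact (cball (x::'a) r)"
  using hyp unfolding delta_hyperbolic_def proper_space_def by blast

lemma delta_nonneg: "0 \<le> \<delta>"
proof -
  fix x :: 'a
  have "geod_seg (\<lambda>_. x) x x"
    unfolding geod_seg_def by auto
  from thin[OF this this, of 0] show ?thesis
    by (simp add: gprod_def)
qed

lemma gprod_four_point:
  fixes w x y z :: 'a
  shows "min (gprod w x y) (gprod w y z) - \<delta> \<le> gprod w x z"
proof -
  obtain p q r where p: "geod_seg p w x" and q: "geod_seg q w y" and r: "geod_seg r w z"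
    using geod_seg_exists by meson
  define t where "t = min (gprod w x y) (gprod w y z)"
  have t: "0 \<le> t" "t \<le> dist w x" "t \<le> dist w z"
    using gprod_nonneg gprod_le_dist_left[of w x y] gprod_le_dist_right[of w y z] t_def by auto
  have "dist (p t) (q t) \<le> \<delta>" "dist (q t) (r t) \<le> \<delta>"
    using thin[OF p q t(1)] thin[OF q r t(1)] t_def by auto
  moreover have "dist x (p t) = dist w x - t" "dist (r t) z = dist w z - t"
    using geod_seg_dist_end[OF p t(1,2)] geod_seg_dist_end[OF r t(1,3)] by (auto simp: dist_commute)
  moreover have "dist x z \<le> dist x (p t) + dist (p t) (q t) + dist (q t) (r t) + dist (r t) z"
    by (smt (verit) dist_triangle)
  ultimately have "t - \<delta> \<le> gprod w x z"
    unfolding gprod_def by (simp add: field_simps)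
  then show ?thesis
    unfolding t_def .
qed

lemma dist_geod_seg_le_gprod:
  fixes x y z :: 'a
  assumes p: "geod_seg p y z"
  shows "dist x (p (gprod y x z)) \<le> gprod x y z + \<delta>"
proof -
  obtain q where q: "geod_seg q y x"
    using geod_seg_exists by blast
  define t where "t = gprod y x z"
  have t: "0 \<le> t" "t \<le> dist y x" "t \<le> gprod y z x"
    using gprod_nonneg[of y x z] gprod_le_dist_left[of y x z] gprod_commute[of y x z] t_def by auto
  have "dist (p t) (q t) \<le> \<delta>"
    using thin[OF p q t(1,3)] .
  moreover have "dist (q t) x = gprod x y z"
    using geod_seg_dist_end[OF q t(1,2)] unfolding t_def gprod_def by (simp add: dist_commute field_simps)
  ultimately show ?thesis
    using dist_triangle[of x "p t" "q t"] t_def by (simp add: dist_commute)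
qed

lemma dist_geod_seg_le_max:
  fixes y z w :: 'a
  assumes p: "geod_seg p y z" and u: "0 \<le> u" "u \<le> dist y z"
  shows "dist (p u) w \<le> max (dist y w) (dist z w) + \<delta>"
proof (cases "u \<le> gprod y z w")
  case True
  obtain q where q: "geod_seg q y w"
    using geod_seg_exists by blast
  have "u \<le> dist y w"
    using True gprod_le_dist_right[of y z w] by linarith
  then have "dist (q u) w = dist y w - u"
    using geod_seg_dist_end[OF q u(1)] by blast
  then show ?thesis
    using thin[OF p q u(1) True] dist_triangle[of "p u" w "q u"] u(1) by auto
next
  case False
  define v where "v = dist y z - u"
  obtain q where q: "geod_seg q z w"
    using geod_seg_exists by blast
  have v: "0 \<le> v" "v \<le> gprod z y w"
    using False u gprod_add_gprod_swap[of y z w] gprod_commute v_def by auto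
  then have "dist (q v) w = dist z w - v"
    using geod_seg_dist_end[OF q v(1)] gprod_le_dist_right[of z y w] by auto
  moreover have "dist (p u) (q v) \<le> \<delta>"
    using thin[OF geod_seg_reverse[OF p] q v] v_def by simp
  ultimately show ?thesis
    using dist_triangle[of "p u" w "q v"] v(1) by auto
qed

lemma dist_geod_line_le_infdist_halves:
  fixes z :: 'a
  assumes c: "geod_line c"
    and "infdist z (c ` {..t}) \<le> \<rho>" "infdist z (c ` {t..}) \<le> \<rho>"
  shows "dist (c t) z \<le> \<rho> + \<delta>"
proof (rule field_le_epsilon)
  fix e :: real assume "0 < e"
  then obtain a b where a: "a \<le> t" "dist z (c a) < \<rho> + e" and b: "t \<le> b" "dist z (c b) < \<rho> + e"
    using infdist_lessE[of z "c ` {..t}" "\<rho> + e"] infdist_lessE[of z "c ` {t..}" "\<rho> + e"] assms(2,3)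
    by (smt (verit) atLeast_iff atMost_iff empty_iff image_iff order_refl)
  have "dist (c (a + (t - a))) z \<le> max (dist (c a) z) (dist (c b) z) + \<delta>"
    using c a b unfolding geod_line_def
    by (intro dist_geod_seg_le_max[OF geod_line_segment[OF c]]) auto
  then show "dist (c t) z \<le> \<rho> + \<delta> + e"
    using a b by (simp add: dist_commute)
qed

end

section \<open>Isometries and displacement\<close>

lemma isometry_dist: "isometry g \<Longrightarrow> dist (g a) (g b) = dist a b"
  unfolding isometry_def by auto

lemma isometry_apply_inv: "isometry g \<Longrightarrow> g (inv g a) = a"
  unfolding isometry_def by (simp add: bij_is_surj surj_f_inv_f)

lemma isometry_inv_apply: "isometry g \<Longrightarrow> inv g (g a) = a"
  unfolding isometry_def by (simp add: bij_is_inj)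

lemma isometry_inv_dist: "isometry g \<Longrightarrow> dist (inv g a) (inv g b) = dist a b"
  by (metis isometry_dist isometry_apply_inv)

lemma geod_seg_inv_reverse:
  assumes "isometry g" "geod_seg c x (g x)"
  shows "geod_seg (\<lambda>v. inv g (c (dist x (g x) - v))) x (inv g x)"
  using geod_seg_isometric_image[OF geod_seg_reverse[OF assms(2)] isometry_inv_dist[OF assms(1)]]
  by (simp add: comp_def isometry_inv_apply[OF assms(1)])

lemma ipow_0 [simp]: "ipow g 0 a = a"
  by (simp add: ipow_def)

lemma ipow_succ:
  assumes "isometry g"
  shows "ipow g (k + 1) a = g (ipow g k a)"
proof (cases "0 \<le> k")
  case True
  then have "nat (k + 1) = Suc (nat k)"
    by auto
  with True show ?thesis
    by (simp add: ipow_def)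
next
  case False
  then consider "k = -1" | "k < -1"
    by linarith
  then show ?thesis
  proof cases
    case 2
    then have "nat (- k) = Suc (nat (- (k + 1)))"
      by auto
    with 2 show ?thesis
      using isometry_apply_inv[OF assms] by (simp add: ipow_def)
  qed (use isometry_apply_inv[OF assms] in \<open>simp add: ipow_def\<close>)
qed

lemma ipow_pred:
  assumes "isometry g"
  shows "ipow g (k - 1) a = inv g (ipow g k a)"
  using ipow_succ[OF assms, of "k - 1" a] isometry_inv_apply[OF assms] by simp

lemma ipow_add:
  assumes "isometry g"
  shows "ipow g (m + n) a = ipow g m (ipow g n a)"
proof (induction m rule: int_induct[where k = 0])
  case (step1 i)
  then show ?case
    using ipow_succ[OF assms, of "i + n"] ipow_succ[OF assms, of i] by (simp add: algebra_simps)
next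
  case (step2 i)
  then show ?case
    using ipow_pred[OF assms, of "i + n"] ipow_pred[OF assms, of i] by (simp add: algebra_simps)
qed simp

lemma ipow_dist:
  assumes "isometry g"
  shows "dist (ipow g k a) (ipow g k b) = dist a b"
proof (induction k rule: int_induct[where k = 0])
  case (step1 i)
  then show ?case
    using ipow_succ[OF assms] isometry_dist[OF assms] by simp
next
  case (step2 i)
  then show ?case
    using ipow_pred[OF assms] isometry_inv_dist[OF assms] by simp
qed simp

lemma ipow_commute:
  assumes "isometry g"
  shows "ipow g k (g a) = g (ipow g k a)"
  using ipow_add[OF assms, of k 1 a] ipow_add[OF assms, of 1 k a] ipow_succ[OF assms, of 0]
  by (simp add: add.commute)

lemma subadditive_le_mult_add:
  fixes a :: "nat \<Rightarrow> real"
  assumes "\<And>m n. a (m + n) \<le> a m + a n"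
  shows "a (q * m + r) \<le> real q * a m + a r"
proof (induction q)
  case (Suc q)
  have "a (Suc q * m + r) \<le> a m + a (q * m + r)"
    using assms[of m "q * m + r"] by (simp add: algebra_simps)
  with Suc show ?case
    by (simp add: algebra_simps)
qed simp

lemma subadditive_div_le:
  fixes a :: "nat \<Rightarrow> real"
  assumes sub: "\<And>m n. a (m + n) \<le> a m + a n" and nonneg: "\<And>n. 0 \<le> a n" and "a 0 = 0"
    and "0 < m" "0 < n"
  shows "a n / n \<le> a m / m + m * a 1 / n"
proof -
  define q r where "q = n div m" and "r = n mod m"
  have "a r \<le> real r * a 1"
    using subadditive_le_mult_add[OF sub, of r 1 0] \<open>a 0 = 0\<close> by simp
  also have "\<dots> \<le> real m * a 1"
    using \<open>0 < m\<close> nonneg[of 1] by (simp add: r_def mult_right_mono)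
  finally have "a n \<le> real q * a m + real m * a 1"
    using subadditive_le_mult_add[OF sub, of q m r] by (simp add: q_def r_def)
  moreover have "real q * a m \<le> real n * (a m / m)"
  proof -
    have "real q * real m \<le> real n"
      by (metis q_def div_times_less_eq_dividend of_nat_le_iff of_nat_mult)
    then have "real q * real m * a m \<le> real n * a m"
      using nonneg[of m] by (rule mult_right_mono)
    then show ?thesis
      using \<open>0 < m\<close> by (simp add: field_simps)
  qed
  ultimately show ?thesis
    using \<open>0 < n\<close> by (simp add: field_simps)
qed

lemma subadditive_tendsto_INF:
  fixes a :: "nat \<Rightarrow> real"
  assumes sub: "\<And>m n. a (m + n) \<le> a m + a n" and nonneg: "\<And>n. 0 \<le> a n" and a0: "a 0 = 0"
  shows "(\<lambda>n. a n / n) \<longlonglongrightarrow> (INF n\<in>{1..}. a n / n)"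
proof (rule LIMSEQ_I)
  define L where "L = (INF n\<in>{1..}. a n / n)"
  have bdd: "bdd_below ((\<lambda>n. a n / n) ` {1..})"
    by (rule bdd_belowI[of _ 0]) (auto intro: nonneg divide_nonneg_nonneg)
  fix e :: real assume "0 < e"
  then have "\<exists>m\<in>{1..}. a m / m < L + e / 2"
    using cINF_less_iff[OF _ bdd, of "L + e / 2"] \<open>0 < e\<close> by (simp add: L_def)
  then obtain m where m: "1 \<le> m" "a m / m < L + e / 2"
    by auto
  obtain N :: nat where N: "2 * m * a 1 / e < N"
    using reals_Archimedean2 by blast
  show "\<exists>N. \<forall>n\<ge>N. norm (a n / n - L) < e"
  proof (intro exI allI impI)
    fix n assume "max N 1 \<le> n"
    then have "2 * m * a 1 / e < n" "0 < n"
      using N by (auto simp: less_le_trans)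
    then have "m * a 1 / n < e / 2"
      using \<open>0 < e\<close> by (simp add: field_simps)
    moreover have "L \<le> a n / n"
      unfolding L_def using \<open>0 < n\<close> by (intro cINF_lower[OF bdd]) auto
    moreover have "a n / n \<le> a m / m + m * a 1 / n"
      using subadditive_div_le[OF sub nonneg a0, of m n] m \<open>0 < n\<close> by simp
    ultimately have "\<bar>a n / n - L\<bar> < e"
      using m(2) by linarith
    then show "norm (a n / n - L) < e"
      by simp
  qed
qed

lemma min_disp_le: "min_disp g \<le> dist z (g z)"
  unfolding min_disp_def by (rule cINF_lower) (auto intro: bdd_belowI[of _ 0])

lemma funpow_isometry_dist: "isometry g \<Longrightarrow> dist ((g ^^ k) a) ((g ^^ k) b) = dist a b"
  by (induction k) (auto simp: isometry_dist)

lemma asymp_disp_le: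
  assumes iso: "isometry g"
  shows "asymp_disp g \<le> dist y (g y)"
proof -
  define A where "A x n = dist x ((g ^^ n) x)" for x n
  define L where "L = (INF n\<in>{1..}. A y n / n)"
  have A_sub: "A x (m + n) \<le> A x m + A x n" for x m n
    using dist_triangle[of x "(g ^^ m) ((g ^^ n) x)" "(g ^^ m) x"] funpow_isometry_dist[OF iso, of m]
    by (simp add: A_def funpow_add dist_commute)
  have lim: "(\<lambda>n. A x n / n) \<longlonglongrightarrow> L" for x
  proof -
    have "\<bar>A x n - A y n\<bar> \<le> 2 * dist x y" for n
      using dist_triangle[of x "(g ^^ n) x" y] dist_triangle[of y "(g ^^ n) y" x]
        dist_triangle[of y "(g ^^ n) x" "(g ^^ n) y"] dist_triangle[of x "(g ^^ n) y" "(g ^^ n) x"]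
        funpow_isometry_dist[OF iso, of n x y]
      by (simp add: A_def dist_commute abs_le_iff)
    then have "(\<lambda>n. (A x n - A y n) / n) \<longlonglongrightarrow> 0"
      by (intro Lim_null_comparison[OF _ lim_const_over_n[of "2 * dist x y"]])
        (auto simp: divide_right_mono)
    moreover have "(\<lambda>n. A y n / n) \<longlonglongrightarrow> L"
      unfolding L_def by (rule subadditive_tendsto_INF) (auto simp: A_def A_sub[unfolded A_def])
    ultimately show ?thesis
      using tendsto_add by (fastforce simp: diff_divide_distrib)
  qed
  have "asymp_disp g = L"
    unfolding asymp_disp_def using lim[unfolded A_def] LIMSEQ_unique by (intro the_equality) blast+
  also have "L \<le> A y 1 / real 1"
    unfolding L_def by (rule cINF_lower) (auto intro!: bdd_belowI[of _ 0] simp: A_def)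
  finally show ?thesis
    by (simp add: A_def)
qed

lemma asymp_disp_le_min_disp: "isometry g \<Longrightarrow> asymp_disp g \<le> min_disp g"
  unfolding min_disp_def by (rule cINF_greatest) (auto intro: asymp_disp_le)

lemma Mmin_ipow:
  assumes "isometry g" "z \<in> Mmin g"
  shows "ipow g k z \<in> Mmin g"
  using assms ipow_dist[OF assms(1), of k z "g z"] by (simp add: Mmin_def ipow_commute)

lemma geod_seg_subset_Mmin:
  assumes iso: "isometry g" and z: "z \<in> Mmin g" and c: "geod_seg c z (g z)"
    and u: "0 \<le> u" "u \<le> dist z (g z)"
  shows "c u \<in> Mmin g"
proof -
  have "dist (c u) (g (c u)) \<le> dist (c u) (g z) + dist (g z) (g (c u))"
    by (rule dist_triangle)
  also have "\<dots> = dist z (g z)"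
    using geod_seg_dist_start[OF c u] geod_seg_dist_end[OF c u] isometry_dist[OF iso] by simp
  finally show ?thesis
    using z min_disp_le[of g "c u"] unfolding Mmin_def by simp
qed

lemma int_sign_change:
  fixes f :: "int \<Rightarrow> real"
  assumes "f i \<le> 0" "0 \<le> f j" "i < j"
  shows "\<exists>k. f k \<le> 0 \<and> 0 \<le> f (k + 1)"
proof -
  have "i + 1 \<le> j"
    using assms(3) by simp
  then show ?thesis
    using assms(2)
  proof (induction j rule: int_ge_induct)
    case base
    then show ?case
      using assms(1) by blast
  next
    case (step j)
    show ?case
    proof (cases "0 \<le> f j")
      case True
      with step show ?thesis
        by blast
    next
      case False
      with step show ?thesis
        by (intro exI[of _ j]) simp
    qed
  qed
qed

text \<open>The geodesics \<open>[\<gamma>\<^sup>k w, \<gamma>\<^sup>k\<^sup>+\<^sup>1 w]\<close> lie in \<open>Mmin\<close> and chain together into a path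
  through the whole orbit of \<open>w\<close>.\<close>
lemma Mmin_sign_change:
  fixes g :: "'a::metric_space \<Rightarrow> 'a"
  assumes geo: "geodesic_space TYPE('a)" and iso: "isometry g" and w: "w \<in> Mmin g"
    and \<phi>: "continuous_on UNIV \<phi>" and "\<phi> (ipow g i w) \<le> (0::real)" "0 \<le> \<phi> (ipow g j w)" "i < j"
  shows "\<exists>z\<in>Mmin g. \<phi> z = 0"
proof -
  obtain k where k: "\<phi> (ipow g k w) \<le> 0" "0 \<le> \<phi> (g (ipow g k w))"
    using int_sign_change[of "\<lambda>k. \<phi> (ipow g k w)"] assms(5-7) ipow_succ[OF iso] by metis
  define v where "v = ipow g k w"
  obtain \<sigma> where \<sigma>: "geod_seg \<sigma> v (g v)"
    using geo unfolding geodesic_space_def by blast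
  have "continuous_on {0..dist v (g v)} (\<phi> \<circ> \<sigma>)"
    by (rule continuous_on_compose[OF geod_seg_continuous_on[OF \<sigma>] continuous_on_subset[OF \<phi>]]) simp
  then obtain u where u: "0 \<le> u" "u \<le> dist v (g v)" "\<phi> (\<sigma> u) = 0"
    using IVT'[of "\<phi> \<circ> \<sigma>" 0 0 "dist v (g v)"] k \<sigma> unfolding v_def geod_seg_def by auto
  moreover have "\<sigma> u \<in> Mmin g"
    using geod_seg_subset_Mmin[OF iso Mmin_ipow[OF iso w] \<sigma>[unfolded v_def] u(1,2)[unfolded v_def]] by (simp add: v_def)
  ultimately show ?thesis
    by blast
qed

section \<open>Limits of equi-Lipschitz maps\<close>

lemma equi_lipschitz_Cauchy:
  fixes f :: "nat \<Rightarrow> real \<Rightarrow> 'a::metric_space"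
  assumes lip: "\<And>n a b. dist (f n a) (f n b) \<le> \<bar>a - b\<bar>"
    and dense: "\<And>e. 0 < e \<Longrightarrow> \<exists>s. \<bar>t - s\<bar> < e \<and> Cauchy (\<lambda>n. f n s)"
  shows "Cauchy (\<lambda>n. f n t)"
proof (rule metric_CauchyI)
  fix e :: real assume "0 < e"
  then obtain s where s: "\<bar>t - s\<bar> < e / 3" and "Cauchy (\<lambda>n. f n s)"
    using dense[of "e / 3"] by auto
  then obtain M where M: "\<And>m n. M \<le> m \<Longrightarrow> M \<le> n \<Longrightarrow> dist (f m s) (f n s) < e / 3"
    using metric_CauchyD[of _ "e / 3"] \<open>0 < e\<close> by (metis divide_pos_pos zero_less_numeral)
  have "dist (f m t) (f n t) < e" if "M \<le> m" "M \<le> n" for m n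
  proof -
    have "dist (f m t) (f n t) \<le> dist (f m t) (f m s) + dist (f m s) (f n s) + dist (f n s) (f n t)"
      by (smt (verit) dist_triangle)
    then show ?thesis
      using lip[of m t s] lip[of n s t] M[OF that] s by (simp add: abs_minus_commute)
  qed
  then show "\<exists>M. \<forall>m\<ge>M. \<forall>n\<ge>M. dist (f m t) (f n t) < e"
    by blast
qed

lemma diagonal_convergent_subseq:
  fixes f :: "nat \<Rightarrow> nat \<Rightarrow> 'a::metric_space"
  assumes compact: "\<And>k. compact (K k)" and in_K: "\<And>n k. f n k \<in> K k"
  obtains d where "strict_mono d" "\<And>k. convergent (\<lambda>j. f (d j) k)"
proof -
  interpret subseqs "\<lambda>k s. convergent (\<lambda>j. f (s j) k)"
  proof
    fix k and s :: "nat \<Rightarrow> nat"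
    obtain l \<rho> where "strict_mono (\<rho> :: nat \<Rightarrow> nat)" "((\<lambda>j. f (s j) k) \<circ> \<rho>) \<longlonglongrightarrow> l"
      using seq_compactE[OF compact_imp_seq_compact[OF compact[of k]], of "\<lambda>j. f (s j) k"] in_K by metis
    then show "\<exists>\<rho>. strict_mono \<rho> \<and> convergent (\<lambda>j. f ((s \<circ> \<rho>) j) k)"
      by (auto simp: convergent_def comp_def)
  qed
  have "convergent (\<lambda>j. f (diagseq j) k)" for k
  proof -
    have "convergent (\<lambda>j. f ((diagseq \<circ> (+) (Suc k)) j) k)"
    proof (rule diagseq_holds)
      fix r s :: "nat \<Rightarrow> nat" and n
      assume "strict_mono r" "convergent (\<lambda>j. f (s j) n)"
      then show "convergent (\<lambda>j. f ((s \<circ> r) j) n)"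
        using convergent_subseq_convergent[of "\<lambda>j. f (s j) n" r] by (simp add: comp_def)
    qed
    then show ?thesis
      using convergent_ignore_initial_segment[of "\<lambda>j. f (diagseq j) k" "Suc k"]
      by (simp add: comp_def ac_simps)
  qed
  then show ?thesis
    using that[OF subseq_diagseq] by blast
qed

text \<open>Arzela--Ascoli: a diagonal subsequence converges at all rationals, hence everywhere by
  equicontinuity.\<close>
lemma equi_lipschitz_convergent_subseq:
  fixes f :: "nat \<Rightarrow> real \<Rightarrow> 'a::metric_space"
  assumes compact: "\<And>r. compact (cball x r)"
    and lip: "\<And>n a b. dist (f n a) (f n b) \<le> \<bar>a - b\<bar>"
    and bdd: "\<And>n. dist x (f n 0) \<le> r"
  obtains d c where "strict_mono d" "\<And>t. (\<lambda>j. f (d j) t) \<longlonglongrightarrow> c t"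
proof -
  have in_ball: "f n t \<in> cball x (r + \<bar>t\<bar>)" for n t
    using bdd[of n] lip[of n t 0] dist_triangle[of x "f n t" "f n 0"] by (simp add: dist_commute)
  define q :: "nat \<Rightarrow> real" where "q = from_nat_into \<rat>"
  have q: "range q = \<rat>"
    unfolding q_def by (rule range_from_nat_into) (use Rats_infinite countable_rat in auto)
  obtain d where d: "strict_mono d" and conv_q: "\<And>k. convergent (\<lambda>j. f (d j) (q k))"
    using diagonal_convergent_subseq[of "\<lambda>k. cball x (r + \<bar>q k\<bar>)" "\<lambda>n k. f n (q k)"] compact in_ball
    by blast
  have "Cauchy (\<lambda>j. f (d j) t)" for t
  proof (rule equi_lipschitz_Cauchy[OF lip])
    fix e :: real assume "0 < e"
    then obtain s where "s \<in> \<rat>" "\<bar>t - s\<bar> < e"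
      using Rats_dense_in_real[of "t - e" "t + e"] by (auto simp: abs_diff_less_iff)
    moreover obtain k where "s = q k"
      using q \<open>s \<in> \<rat>\<close> by (metis rangeE)
    ultimately show "\<exists>s. \<bar>t - s\<bar> < e \<and> Cauchy (\<lambda>j. f (d j) s)"
      using convergent_Cauchy[OF conv_q[of k]] by blast
  qed
  then have "\<exists>l. (\<lambda>j. f (d j) t) \<longlonglongrightarrow> l" for t
    using completeE[OF compact_imp_complete[OF compact[of "r + \<bar>t\<bar>"]]] in_ball by metis
  then obtain c where "\<And>t. (\<lambda>j. f (d j) t) \<longlonglongrightarrow> c t"
    by metis
  then show ?thesis
    using that[OF d] by blast
qed

section \<open>The orbit of a point of minimal displacement\<close>

locale hyperbolic_translation =
  fixes \<delta> :: real and \<gamma> :: "'a::metric_space \<Rightarrow> 'a"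
  assumes hyp: "delta_hyperbolic TYPE('a) \<delta>"
    and iso: "isometry \<gamma>"
    and large_disp: "3 * \<delta> < min_disp \<gamma>"

locale min_disp_orbit = hyperbolic_translation +
  fixes x
  assumes x_Mmin: "x \<in> Mmin \<gamma>"
begin

definition orb :: "int \<Rightarrow> 'a" where
  "orb k = ipow \<gamma> k x"

abbreviation disp :: real where
  "disp \<equiv> dist x (\<gamma> x)"

lemma disp_eq: "disp = min_disp \<gamma>"
  using x_Mmin unfolding Mmin_def by simp

lemma orb_0 [simp]: "orb 0 = x"
  by (simp add: orb_def)

lemma orb_1: "orb 1 = \<gamma> x"
  using ipow_succ[OF iso, of 0 x] by (simp add: orb_def)

lemma orb_minus_1: "orb (-1) = inv \<gamma> x"
  using ipow_pred[OF iso, of 0 x] by (simp add: orb_def)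

lemma orb_add: "orb (i + m) = ipow \<gamma> m (orb i)"
  unfolding orb_def using ipow_add[OF iso, of m i x] by (simp add: add.commute)

lemma dist_orb: "dist (orb i) (orb j) = dist x (orb (j - i))"
  using orb_add[of "j - i" i] ipow_dist[OF iso, of i x] by (simp add: orb_def)

lemma gprod_orb_shift: "gprod (orb (j + m)) (orb (i + m)) (orb (k + m)) = gprod (orb j) (orb i) (orb k)"
  unfolding orb_add by (rule gprod_isometric_image) (rule ipow_dist[OF iso])

text \<open>Thinness of the triangles spanned by \<open>x\<close>, \<open>\<gamma> x\<close>, \<open>\<gamma>\<^sup>b x\<close>, \<open>\<gamma>\<^sup>-\<^sup>a x\<close>, \<open>\<gamma>\<^sup>-\<^sup>1 x\<close> joins
  the midpoint \<open>m\<close> of a geodesic \<open>[x, \<gamma> x]\<close> to \<open>\<gamma>\<^sup>-\<^sup>1 m\<close> by a path of length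
  \<open>disp - 2t + 3\<delta>\<close>, where \<open>t\<close> is the Gromov product to be bounded; minimality of
  \<open>disp = d(x, \<gamma> x) \<le> d(m, \<gamma>\<^sup>-\<^sup>1 m)\<close> then forces \<open>t \<le> 3\<delta>/2\<close>.\<close>
lemma orb_gprod_step:
  assumes right: "gprod (orb 1) (orb 0) (orb b) \<le> 3/2 * \<delta>"
    and left: "gprod (orb (-1)) (orb (-a)) (orb 0) \<le> 3/2 * \<delta>"
  shows "gprod x (orb (-a)) (orb b) \<le> 3/2 * \<delta>"
proof -
  obtain \<sigma> where \<sigma>: "geod_seg \<sigma> x (\<gamma> x)"
    using geod_seg_exists[OF hyp] by blast
  define \<tau> where "\<tau> v = inv \<gamma> (\<sigma> (disp - v))" for v
  have \<tau>: "geod_seg \<tau> x (orb (-1))"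
    unfolding \<tau>_def orb_minus_1 by (rule geod_seg_inv_reverse[OF iso \<sigma>])
  have dist_orb_minus_1: "dist x (orb (-1)) = disp"
    using dist_orb[of "-1" 0] by (simp add: dist_commute orb_1)
  obtain A B where A: "geod_seg A x (orb b)" and B: "geod_seg B x (orb (-a))"
    using geod_seg_exists[OF hyp] by meson
  define P where "P = gprod x (orb (-a)) (orb b)"
  define t where "t = min P (disp / 2)"
  have t: "0 \<le> t" "t \<le> disp / 2" "t \<le> P"
    using gprod_nonneg large_disp delta_nonneg[OF hyp] disp_eq unfolding t_def P_def by auto
  have "disp - 3/2 * \<delta> \<le> gprod x (\<gamma> x) (orb b)"
    using gprod_add_gprod_swap[of x "orb 1" "orb b"] right by (simp add: orb_1)
  then have d1: "dist (\<sigma> t) (A t) \<le> \<delta>"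
    using thin[OF hyp \<sigma> A t(1)] t(2) large_disp disp_eq by simp
  have d2: "dist (A t) (B t) \<le> \<delta>"
    using thin[OF hyp A B t(1)] t(3) gprod_commute unfolding P_def by metis
  have "disp - 3/2 * \<delta> \<le> gprod x (orb (-a)) (orb (-1))"
    using gprod_add_gprod_swap[of x "orb (-1)" "orb (-a)"] left dist_orb_minus_1
      gprod_commute[of "orb (-1)" "orb (-a)"] gprod_commute[of x "orb (-a)"] by simp
  then have d3: "dist (B t) (\<tau> t) \<le> \<delta>"
    using thin[OF hyp B \<tau> t(1)] t(2) large_disp disp_eq by simp
  define m where "m = \<sigma> (disp / 2)"
  have "\<tau> (disp / 2) = inv \<gamma> m"
    by (simp add: \<tau>_def m_def)
  then have e: "dist m (\<sigma> t) = disp / 2 - t" "dist (\<tau> t) (inv \<gamma> m) = disp / 2 - t"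
    using geod_seg_dist[OF \<sigma>, of "disp / 2" t] geod_seg_dist[OF \<tau>, of t "disp / 2"] t dist_orb_minus_1
    by (auto simp: m_def)
  have "disp \<le> dist m (inv \<gamma> m)"
    using min_disp_le[of \<gamma> "inv \<gamma> m"] disp_eq isometry_apply_inv[OF iso] by (simp add: dist_commute)
  also have "\<dots> \<le> dist m (\<sigma> t) + dist (\<sigma> t) (A t) + dist (A t) (B t) + dist (B t) (\<tau> t) + dist (\<tau> t) (inv \<gamma> m)"
    by (smt (verit) dist_triangle)
  finally have "t \<le> 3/2 * \<delta>"
    using e d1 d2 d3 by linarith
  then show ?thesis
    using large_disp disp_eq unfolding t_def P_def by (auto simp: min_def split: if_splits)
qed

lemma orb_gprod_le:
  assumes "i \<le> j" "j \<le> k"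
  shows "gprod (orb j) (orb i) (orb k) \<le> 3/2 * \<delta>"
  using assms
proof (induction "nat (k - i)" arbitrary: i j k rule: less_induct)
  case less
  show ?case
  proof (cases "j = i \<or> j = k")
    case True
    then show ?thesis
      using delta_nonneg[OF hyp] by (auto simp: gprod_def dist_commute)
  next
    case False
    have "gprod (orb 1) (orb 0) (orb (k - j)) \<le> 3/2 * \<delta>"
      using less(1)[of "k - j" 0 1] False less(2,3) by simp
    moreover have "gprod (orb (-1)) (orb (i - j)) (orb 0) \<le> 3/2 * \<delta>"
      using less(1)[of 0 "i - j" "-1"] False less(2,3) by simp
    ultimately have "gprod (orb 0) (orb (i - j)) (orb (k - j)) \<le> 3/2 * \<delta>"
      using orb_gprod_step[of "k - j" "j - i"] by simp
    then show ?thesis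
      using gprod_orb_shift[of 0 j "i - j" "k - j"] by simp
  qed
qed

lemma dist_orb_ge: "real n * (disp - 3 * \<delta>) \<le> dist x (orb (int n))"
proof (induction n)
  case (Suc n)
  have "gprod (orb (int n)) (orb 0) (orb (int n + 1)) \<le> 3/2 * \<delta>"
    using orb_gprod_le[of 0 "int n" "int n + 1"] by simp
  moreover have "dist (orb (int n)) (orb (int n + 1)) = disp"
    using dist_orb[of "int n" "int n + 1"] by (simp add: orb_1)
  ultimately have "dist x (orb (int n)) + disp - 3 * \<delta> \<le> dist x (orb (int n + 1))"
    unfolding gprod_def by (simp add: dist_commute field_simps)
  with Suc show ?case
    by (simp add: algebra_simps)
qed simp

lemma dist_orb_minus_ge: "real n * (disp - 3 * \<delta>) \<le> dist x (orb (- int n))"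
  using dist_orb_ge[of n] dist_orb[of "- int n" 0] by (simp add: dist_commute)

lemma gprod_orb_ge:
  assumes "0 \<le> p \<and> p \<le> q \<or> q \<le> p \<and> p \<le> 0"
  shows "dist x (orb p) - 3/2 * \<delta> \<le> gprod x (orb q) (orb p)"
proof -
  have "gprod (orb p) x (orb q) \<le> 3/2 * \<delta>"
    using assms orb_gprod_le[of 0 p q] orb_gprod_le[of q p 0] gprod_commute[of "orb p" x] by auto
  then show ?thesis
    using gprod_add_gprod_swap[of x "orb p" "orb q"] gprod_commute[of x "orb p"] by simp
qed

abbreviation reach :: "nat \<Rightarrow> real" where
  "reach n \<equiv> real n * (disp - 3 * \<delta>) - 3/2 * \<delta>"

lemma filterlim_reach: "filterlim reach at_top sequentially"
proof -
  have "filterlim (\<lambda>n. - 3/2 * \<delta> + (disp - 3 * \<delta>) * real n) at_top sequentially"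
    using large_disp disp_eq
    by (intro filterlim_tendsto_add_at_top filterlim_tendsto_pos_mult_at_top filterlim_real_sequentially)
      auto
  then show ?thesis
    by (simp add: algebra_simps)
qed

lemma filterlim_dist_orb:
  "filterlim (\<lambda>p. dist x (orb (int p))) at_top sequentially"
  "filterlim (\<lambda>p. dist x (orb (- int p))) at_top sequentially"
proof -
  have "reach p \<le> dist x (orb (int p))" "reach p \<le> dist x (orb (- int p))" for p
    using dist_orb_ge[of p] dist_orb_minus_ge[of p] delta_nonneg[OF hyp] by linarith+
  then show "filterlim (\<lambda>p. dist x (orb (int p))) at_top sequentially"
    "filterlim (\<lambda>p. dist x (orb (- int p))) at_top sequentially"
    by (auto intro: filterlim_at_top_mono[OF filterlim_reach] always_eventually)
qed

definition seg :: "nat \<Rightarrow> real \<Rightarrow> 'a" where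
  "seg n = (SOME c. geod_seg c (orb (- int n)) (orb (int n)))"

definition foot :: "nat \<Rightarrow> real" where
  "foot n = gprod (orb (- int n)) x (orb (int n))"

text \<open>The segment \<open>[\<gamma>\<^sup>-\<^sup>n x, \<gamma>\<^sup>n x]\<close>, recentred at the point which thinness places
  within \<open>5\<delta>/2\<close> of \<open>x\<close> and extended by constants to a \<open>1\<close>-Lipschitz map on all of \<open>\<real>\<close>.\<close>
definition approx_line :: "nat \<Rightarrow> real \<Rightarrow> 'a" where
  "approx_line n t = seg n (max 0 (min (dist (orb (- int n)) (orb (int n))) (foot n + t)))"

lemma seg: "geod_seg (seg n) (orb (- int n)) (orb (int n))"
  unfolding seg_def by (rule someI_ex[OF geod_seg_exists[OF hyp]])

lemma foot_bounds:
  "reach n \<le> foot n" "reach n \<le> dist (orb (- int n)) (orb (int n)) - foot n"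
proof -
  let ?G = "gprod x (orb (- int n)) (orb (int n))"
  have "?G \<le> 3/2 * \<delta>"
    using orb_gprod_le[of "- int n" 0 "int n"] by simp
  moreover have "foot n = dist x (orb (- int n)) - ?G"
    and "dist (orb (- int n)) (orb (int n)) - foot n = dist x (orb (int n)) - ?G"
    unfolding foot_def gprod_def by (simp_all add: dist_commute field_simps)
  ultimately show "reach n \<le> foot n" "reach n \<le> dist (orb (- int n)) (orb (int n)) - foot n"
    using dist_orb_minus_ge[of n] dist_orb_ge[of n] by linarith+
qed

lemma foot_nonneg: "0 \<le> foot n" and foot_le: "foot n \<le> dist (orb (- int n)) (orb (int n))"
  unfolding foot_def by (rule gprod_nonneg, rule gprod_le_dist_right)

lemma approx_line_lipschitz: "dist (approx_line n a) (approx_line n b) \<le> \<bar>a - b\<bar>"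
proof -
  let ?L = "dist (orb (- int n)) (orb (int n))"
  have "dist (approx_line n a) (approx_line n b)
      = \<bar>max 0 (min ?L (foot n + a)) - max 0 (min ?L (foot n + b))\<bar>"
    unfolding approx_line_def using foot_nonneg[of n] foot_le[of n]
    by (intro geod_seg_dist[OF seg[of n]]) auto
  also have "\<dots> \<le> \<bar>a - b\<bar>"
    by (auto simp: max_def min_def abs_if)
  finally show ?thesis .
qed

lemma approx_line_eq:
  assumes "\<bar>t\<bar> \<le> reach n"
  shows "approx_line n t = seg n (foot n + t)"
  using assms foot_bounds[of n] unfolding approx_line_def by (simp add: abs_le_iff)

lemma approx_line_isometric:
  assumes "\<bar>a\<bar> \<le> reach n" "\<bar>b\<bar> \<le> reach n"
  shows "dist (approx_line n a) (approx_line n b) = \<bar>a - b\<bar>"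
  using assms foot_bounds[of n] geod_seg_dist[OF seg[of n], of "foot n + a" "foot n + b"]
  by (simp add: approx_line_eq abs_le_iff)

lemma dist_approx_line_0: "dist x (approx_line n 0) \<le> 5/2 * \<delta>"
proof -
  have "approx_line n 0 = seg n (foot n)"
    using foot_nonneg[of n] foot_le[of n] by (simp add: approx_line_def)
  moreover have "gprod x (orb (- int n)) (orb (int n)) \<le> 3/2 * \<delta>"
    using orb_gprod_le[of "- int n" 0 "int n"] by simp
  ultimately show ?thesis
    using dist_geod_seg_le_gprod[OF hyp seg[of n], of x] unfolding foot_def by simp
qed

lemma gprod_approx_line_ge:
  assumes s: "0 \<le> s" "s \<le> reach n"
  shows "s - 5/2 * \<delta> \<le> gprod x (approx_line n s) (orb (int n))"
    and "s - 5/2 * \<delta> \<le> gprod x (approx_line n (- s)) (orb (- int n))"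
proof -
  let ?L = "dist (orb (- int n)) (orb (int n))"
  have near: "dist x (seg n (foot n)) \<le> 5/2 * \<delta>"
    using dist_approx_line_0[of n] foot_nonneg[of n] foot_le[of n] by (simp add: approx_line_def)
  show "s - 5/2 * \<delta> \<le> gprod x (approx_line n s) (orb (int n))"
    using gprod_geod_seg_ge[OF seg[of n], of "foot n" "foot n + s" x "5/2 * \<delta>"] near s
      foot_nonneg[of n] foot_bounds[of n] by (simp add: approx_line_eq)
  have "seg n (?L - (?L - foot n)) = seg n (foot n)"
    by simp
  then show "s - 5/2 * \<delta> \<le> gprod x (approx_line n (- s)) (orb (- int n))"
    using gprod_geod_seg_ge[OF geod_seg_reverse[OF seg[of n]], of "?L - foot n" "?L - foot n + s" x "5/2 * \<delta>"]
      near s foot_nonneg[of n] foot_bounds[of n] foot_le[of n]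
    by (simp add: approx_line_eq dist_commute algebra_simps)
qed

lemma gprod_approx_line_orb_ge:
  assumes s: "\<bar>s\<bar> \<le> reach n" "0 \<le> s \<and> 0 \<le> p \<and> p \<le> int n \<or> s \<le> 0 \<and> - int n \<le> p \<and> p \<le> 0"
  shows "min (\<bar>s\<bar> - 5/2 * \<delta>) (dist x (orb p) - 3/2 * \<delta>) - \<delta> \<le> gprod x (approx_line n s) (orb p)"
proof -
  define q where "q = (if 0 \<le> s \<and> 0 \<le> p then int n else - int n)"
  have "\<bar>s\<bar> - 5/2 * \<delta> \<le> gprod x (approx_line n s) (orb q)"
    using gprod_approx_line_ge[of "\<bar>s\<bar>" n] s unfolding q_def by (cases "0 \<le> s \<and> 0 \<le> p") auto
  moreover have "dist x (orb p) - 3/2 * \<delta> \<le> gprod x (orb q) (orb p)"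
    using gprod_orb_ge[of p q] s unfolding q_def by auto
  ultimately show ?thesis
    using gprod_four_point[OF hyp, of x "approx_line n s" "orb q" "orb p"] by linarith
qed

lemma exists_line_near_orbit:
  obtains c where "geod_line c" "dist x (c 0) \<le> 5/2 * \<delta>"
    "\<And>s p. 0 \<le> s \<and> 0 \<le> p \<or> s \<le> 0 \<and> p \<le> 0 \<Longrightarrow>
      min (\<bar>s\<bar> - 5/2 * \<delta>) (dist x (orb p) - 3/2 * \<delta>) - \<delta> \<le> gprod x (c s) (orb p)"
proof -
  obtain d c where d: "strict_mono d" and lim: "\<And>t. (\<lambda>j. approx_line (d j) t) \<longlonglongrightarrow> c t"
    by (rule equi_lipschitz_convergent_subseq[where f = approx_line, OF proper_compact_cball[OF hyp]
          approx_line_lipschitz dist_approx_line_0]) blast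
  have large: "eventually (\<lambda>j. a \<le> reach (d j)) sequentially" for a
    using eventually_subseq[OF d, of "\<lambda>n. a \<le> reach n"] filterlim_reach by (simp add: filterlim_at_top)
  show ?thesis
  proof (rule that)
    show "geod_line c"
      unfolding geod_line_def
    proof (intro allI)
      fix a b
      have "eventually (\<lambda>j. dist (approx_line (d j) a) (approx_line (d j) b) = \<bar>a - b\<bar>) sequentially"
        using large[of "max \<bar>a\<bar> \<bar>b\<bar>"] by eventually_elim (simp add: approx_line_isometric)
      then show "dist (c a) (c b) = \<bar>a - b\<bar>"
        by (rule LIMSEQ_unique[OF tendsto_dist[OF lim lim] tendsto_eventually])
    qed
    have "\<forall>j. dist x (approx_line (d j) 0) \<le> 5/2 * \<delta>"
      using dist_approx_line_0 by blast
    then show "dist x (c 0) \<le> 5/2 * \<delta>"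
      by (rule tendsto_upperbound[OF tendsto_dist[OF tendsto_const lim] always_eventually]) simp
    fix s :: real and p :: int
    assume sp: "0 \<le> s \<and> 0 \<le> p \<or> s \<le> 0 \<and> p \<le> 0"
    have "eventually (\<lambda>j. nat \<bar>p\<bar> \<le> d j) sequentially"
      by (rule eventually_subseq[OF d eventually_ge_at_top])
    with large[of "\<bar>s\<bar>"] have "eventually (\<lambda>j. min (\<bar>s\<bar> - 5/2 * \<delta>) (dist x (orb p) - 3/2 * \<delta>) - \<delta>
        \<le> gprod x (approx_line (d j) s) (orb p)) sequentially"
    proof eventually_elim
      case (elim j)
      then show ?case
        using sp by (intro gprod_approx_line_orb_ge) auto
    qed
    then show "min (\<bar>s\<bar> - 5/2 * \<delta>) (dist x (orb p) - 3/2 * \<delta>) - \<delta> \<le> gprod x (c s) (orb p)"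
      by (intro tendsto_lowerbound[OF tendsto_gprod[OF lim]]) simp_all
  qed
qed

lemma exists_axis_near: "\<exists>c. axis \<gamma> c \<and> dist x (c 0) \<le> 5/2 * \<delta>"
proof -
  obtain c where c: "geod_line c" "dist x (c 0) \<le> 5/2 * \<delta>"
    and bound: "\<And>s p. 0 \<le> s \<and> 0 \<le> p \<or> s \<le> 0 \<and> p \<le> 0 \<Longrightarrow>
      min (\<bar>s\<bar> - 5/2 * \<delta>) (dist x (orb p) - 3/2 * \<delta>) - \<delta> \<le> gprod x (c s) (orb p)"
    using exists_line_near_orbit by blast
  have all_points: "same_ideal_limit c F (\<lambda>p. ipow \<gamma> (k p) y) sequentially"
    if "same_ideal_limit c F (\<lambda>p. orb (k p)) sequentially" for F k y
    using that by (rule same_ideal_limit_bounded_perturb[where C = "dist x y"])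
      (simp add: orb_def ipow_dist[OF iso])
  have "same_ideal_limit c at_top (\<lambda>p. orb (int p)) sequentially"
  proof (rule same_ideal_limit_min[where x = x])
    show "filterlim (\<lambda>s. - 7/2 * \<delta> + s) at_top at_top"
      by (rule filterlim_tendsto_add_at_top[OF tendsto_const filterlim_ident])
    show "filterlim (\<lambda>p. - 5/2 * \<delta> + dist x (orb (int p))) at_top sequentially"
      by (rule filterlim_tendsto_add_at_top[OF tendsto_const filterlim_dist_orb(1)])
    show "eventually (\<lambda>(s, p). min (- 7/2 * \<delta> + s) (- 5/2 * \<delta> + dist x (orb (int p)))
        \<le> gprod x (c s) (orb (int p))) (at_top \<times>\<^sub>F sequentially)"
      using eventually_prodI[OF eventually_ge_at_top[of 0] eventually_True]
    proof eventually_elim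
      case (elim sp)
      then show ?case
        using bound[of "fst sp" "int (snd sp)"] by (auto simp: case_prod_beta min_def split: if_splits)
    qed
  qed
  moreover have "same_ideal_limit c at_bot (\<lambda>p. orb (- int p)) sequentially"
  proof (rule same_ideal_limit_min[where x = x])
    show "filterlim (\<lambda>s. - 7/2 * \<delta> + - s) at_top at_bot"
      by (rule filterlim_tendsto_add_at_top[OF tendsto_const filterlim_uminus_at_top_at_bot])
    show "filterlim (\<lambda>p. - 5/2 * \<delta> + dist x (orb (- int p))) at_top sequentially"
      by (rule filterlim_tendsto_add_at_top[OF tendsto_const filterlim_dist_orb(2)])
    show "eventually (\<lambda>(s, p). min (- 7/2 * \<delta> + - s) (- 5/2 * \<delta> + dist x (orb (- int p)))
        \<le> gprod x (c s) (orb (- int p))) (at_bot \<times>\<^sub>F sequentially)"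
      using eventually_prodI[OF eventually_le_at_bot[of 0] eventually_True]
    proof eventually_elim
      case (elim sp)
      then show ?case
        using bound[of "fst sp" "- int (snd sp)"] by (auto simp: case_prod_beta min_def split: if_splits)
    qed
  qed
  ultimately have "axis \<gamma> c"
    using c(1) all_points[of at_top int] all_points[of at_bot "\<lambda>p. - int p"] unfolding axis_def by auto
  with c(2) show ?thesis
    by blast
qed

lemma near_axis:
  assumes "axis \<gamma> c"
  shows "\<exists>\<tau>. dist x (c \<tau>) \<le> 9/2 * \<delta>"
proof -
  define R where "R = 7/2 * \<delta> + 1"
  have c: "geod_line c"
    using assms unfolding axis_def by blast
  have "same_ideal_limit c at_top (\<lambda>p. orb (int p)) sequentially"
    "same_ideal_limit c at_bot (\<lambda>p. orb (- int p)) sequentially"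
    using assms unfolding axis_def orb_def by blast+
  then obtain s1 p1 s2 p2 where s1: "0 \<le> s1" "R \<le> gprod x (c s1) (orb (int p1))"
    and s2: "s2 \<le> 0" "R \<le> gprod x (c s2) (orb (- int p2))"
    using same_ideal_limit_obtain[where P = "\<lambda>s. 0 \<le> s" and R = R and w = x]
      same_ideal_limit_obtain[where P = "\<lambda>s. s \<le> 0" and R = R and w = x]
    by (metis eventually_ge_at_top eventually_le_at_bot trivial_limit_at_top_linorder
        trivial_limit_at_bot_linorder trivial_limit_sequentially)
  have "gprod x (c s2) (c s1) \<le> 7/2 * \<delta>"
  proof -
    have "gprod x (orb (- int p2)) (orb (int p1)) \<le> 3/2 * \<delta>"
      using orb_gprod_le[of "- int p2" 0 "int p1"] by simp
    moreover have "min (gprod x (c s2) (c s1)) (gprod x (c s1) (orb (int p1))) - \<delta>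
        \<le> gprod x (c s2) (orb (int p1))"
      and "min (gprod x (orb (- int p2)) (c s2)) (gprod x (c s2) (orb (int p1))) - \<delta>
        \<le> gprod x (orb (- int p2)) (orb (int p1))"
      by (rule gprod_four_point[OF hyp])+
    ultimately show ?thesis
      using s1 s2 gprod_commute[of x "orb (- int p2)" "c s2"] delta_nonneg[OF hyp]
      unfolding R_def by (auto simp: min_def split: if_splits)
  qed
  then have "dist x (c (s2 + gprod (c s2) x (c s1))) \<le> 9/2 * \<delta>"
    using dist_geod_seg_le_gprod[OF hyp geod_line_segment[OF c], of s2 s1 x] s1 s2 by simp
  then show ?thesis
    by blast
qed

lemma infdist_Mset_le: "infdist x (Mset \<gamma>) \<le> 5/2 * \<delta>"
proof -
  obtain c where "axis \<gamma> c" "dist x (c 0) \<le> 5/2 * \<delta>"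
    using exists_axis_near by blast
  moreover from \<open>axis \<gamma> c\<close> have "c 0 \<in> Mset \<gamma>"
    using mem_Mset_iff by blast
  ultimately show ?thesis
    using infdist_le[of "c 0" "Mset \<gamma>" x] by linarith
qed

end

context hyperbolic_translation
begin

lemma min_infdist_axis_halves_le:
  assumes "axis \<gamma> c" "z \<in> Mmin \<gamma>"
  shows "min (infdist z (c ` {..t})) (infdist z (c ` {t..})) \<le> 9/2 * \<delta>"
proof -
  interpret min_disp_orbit \<delta> \<gamma> z
    by unfold_locales (rule assms(2))
  obtain \<tau> where "dist z (c \<tau>) \<le> 9/2 * \<delta>"
    using near_axis[OF assms(1)] by blast
  then show ?thesis
    using infdist_le[of "c \<tau>" "c ` {..t}" z] infdist_le[of "c \<tau>" "c ` {t..}" z] by (cases "\<tau> \<le> t") auto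
qed

lemma Mmin_balanced_point:
  assumes c: "axis \<gamma> c" and w: "w \<in> Mmin \<gamma>"
  shows "\<exists>z\<in>Mmin \<gamma>. infdist z (c ` {..t}) = infdist z (c ` {t..})"
proof -
  define L R where "L = c ` {..t}" and "R = c ` {t..}"
  have line: "geod_line c" and top: "same_ideal_limit c at_top (\<lambda>p. ipow \<gamma> (int p) w) sequentially"
    and bot: "same_ideal_limit c at_bot (\<lambda>p. ipow \<gamma> (- int p) w) sequentially"
    using c unfolding axis_def by blast+
  have "L \<noteq> {}" "R \<noteq> {}"
    unfolding L_def R_def by auto
  have evL: "eventually (\<lambda>s. \<forall>a\<in>L. gprod (c t) (c s) a = 0) at_top"
    using eventually_ge_at_top[of t] by eventually_elim (auto simp: L_def intro: geod_line_gprod_eq_0[OF line])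
  obtain p1 where p1: "9/2 * \<delta> < infdist (ipow \<gamma> (int p1) w) L"
    using same_ideal_limit_escapes[OF top trivial_limit_at_top_linorder trivial_limit_sequentially
        \<open>L \<noteq> {}\<close> evL] by blast
  have evR: "eventually (\<lambda>s. \<forall>a\<in>R. gprod (c t) (c s) a = 0) at_bot"
    using eventually_le_at_bot[of t] by eventually_elim (auto simp: R_def intro: geod_line_gprod_eq_0[OF line])
  obtain p2 where p2: "9/2 * \<delta> < infdist (ipow \<gamma> (- int p2) w) R"
    using same_ideal_limit_escapes[OF bot trivial_limit_at_bot_linorder trivial_limit_sequentially
        \<open>R \<noteq> {}\<close> evR] by blast
  define \<phi> where "\<phi> z = infdist z L - infdist z R" for z
  have near: "min (infdist (ipow \<gamma> k w) L) (infdist (ipow \<gamma> k w) R) \<le> 9/2 * \<delta>" for k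
    unfolding L_def R_def by (rule min_infdist_axis_halves_le[OF c Mmin_ipow[OF iso w]])
  have neg: "\<phi> (ipow \<gamma> (- int p2) w) < 0"
    using near[of "- int p2"] p2 unfolding \<phi>_def min_le_iff_disj by auto
  have pos: "0 < \<phi> (ipow \<gamma> (int p1) w)"
    using near[of "int p1"] p1 unfolding \<phi>_def min_le_iff_disj by auto
  from neg pos have "- int p2 < int p1"
    by (cases "p1 = 0 \<and> p2 = 0") auto
  moreover have "continuous_on UNIV \<phi>"
    unfolding \<phi>_def by (intro continuous_intros)
  moreover have "geodesic_space TYPE('a)"
    using hyp unfolding delta_hyperbolic_def by blast
  ultimately obtain z where "z \<in> Mmin \<gamma>" "\<phi> z = 0"
    using Mmin_sign_change[OF _ iso w _ less_imp_le[OF neg] less_imp_le[OF pos]] by blast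
  then show ?thesis
    unfolding \<phi>_def L_def R_def by auto
qed

lemma infdist_axis_Mmin_le:
  assumes c: "axis \<gamma> c" and "Mmin \<gamma> \<noteq> {}"
  shows "infdist (c t) (Mmin \<gamma>) \<le> 11/2 * \<delta>"
proof -
  obtain w where "w \<in> Mmin \<gamma>"
    using assms(2) by blast
  then obtain z where z: "z \<in> Mmin \<gamma>" and eq: "infdist z (c ` {..t}) = infdist z (c ` {t..})"
    using Mmin_balanced_point[OF c] by blast
  then have "infdist z (c ` {..t}) \<le> 9/2 * \<delta>" "infdist z (c ` {t..}) \<le> 9/2 * \<delta>"
    using min_infdist_axis_halves_le[OF c z, of t] by simp_all
  then have "dist (c t) z \<le> 9/2 * \<delta> + \<delta>"
    using c unfolding axis_def by (intro dist_geod_line_le_infdist_halves[OF hyp]) auto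
  then show ?thesis
    using infdist_le[OF z, of "c t"] by simp
qed

lemma infdist_Mset_Mmin_le:
  assumes "y \<in> Mset \<gamma>"
  shows "infdist y (Mmin \<gamma>) \<le> 11/2 * \<delta>"
proof (cases "Mmin \<gamma> = {}")
  case True
  then show ?thesis
    using delta_nonneg[OF hyp] by (simp add: infdist_def)
next
  case False
  from assms obtain c t where c: "axis \<gamma> c" and "y = c t"
    unfolding mem_Mset_iff by blast
  then show ?thesis
    using infdist_axis_Mmin_le[OF c False, of t] by simp
qed

end

theorem mainTheorem5:
  fixes \<delta> :: real and \<gamma> :: "'a::metric_space \<Rightarrow> 'a"
  assumes "delta_hyperbolic TYPE('a) \<delta>"
    and "hyperbolic_isometry \<gamma>"
    and "asymp_disp \<gamma> > 3 * \<delta>"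
  shows "(\<forall>x\<in>Mmin \<gamma>. infdist x (Mset \<gamma>) \<le> 7/2 * \<delta>) \<and>
         (\<forall>x\<in>Mset \<gamma>. infdist x (Mmin \<gamma>) \<le> 15/2 * \<delta>)"
proof -
  have iso: "isometry \<gamma>"
    using assms(2) unfolding hyperbolic_isometry_def by blast
  interpret hyperbolic_translation \<delta> \<gamma>
    using assms(1,3) asymp_disp_le_min_disp[OF iso] iso by unfold_locales auto
  have "infdist x (Mset \<gamma>) \<le> 7/2 * \<delta>" if "x \<in> Mmin \<gamma>" for x
  proof -
    interpret min_disp_orbit \<delta> \<gamma> x
      by unfold_locales (rule that)
    show ?thesis
      using infdist_Mset_le delta_nonneg[OF hyp] by linarith
  qed
  moreover have "infdist y (Mmin \<gamma>) \<le> 15/2 * \<delta>" if "y \<in> Mset \<gamma>" for y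
    using infdist_Mset_Mmin_le[OF that] delta_nonneg[OF hyp] by linarith
  ultimately show ?thesis
    by blast
qed

end
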